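(* Let a countable group $G$ act on a set $X$, let $\Phi=(\ell,\phi,\mathcal{Z},\Gamma,\mathcal{H})$ be a chart for $G$, let $0<\epsilon<\tfrac12$, let $A\subseteq\mathbb{Z}^\ell\times\Gamma$ be a rectangle, let $R\subseteq X$ be $(\Phi,\epsilon)$-roughly $A$ at $x\in X^{\mathcal{H}}$, and let $M$ be a positive integer with $(M+2)\cdot A+4\cdot\mathcal{Z}\subseteq\mathrm{dom}(\phi)$. Let $y\in X^{\mathcal{H}}$. (i) If $y=\phi(u)\cdot x$ with $u\in M\cdot A$, then $R$ is $(\Phi,2\epsilon)$-roughly $A-u$ at $y$. (ii) If $x=\phi(v)\cdot y$ with $-v\in M\cdot A$, then $R$ is $(\Phi,2\epsilon)$-roughly $A+v$ at $y$.
   Context: Rectangles: Let $\Gamma$ be a finite additive abelian group with identity $0_\Gamma$ and $\ell\in\mathbb{N}$. Elements $v$ of $\mathbb{R}^\ell\times\Gamma$ have coordinates $v_1,\dots,v_\ell\in\mathbb{R}$, $v_{\ell+1}\in\Gamma$; $\mathbf{0}$ has first $\ell$ coordinates $0$ and last coordinate $0_\Gamma$. For $\lambda\in\mathbb{R}$, $\lambda\cdot v=(\lambda v_1,\dots,\lambda v_\ell,v_{\ell+1})$. For $a\in\mathbb{R}^\ell\times\Gamma$ let $\mathrm{Rec}(a)=\{b\in\mathbb{Z}^\ell\times\Gamma: -|a_i|\le b_i\le|a_i|,\ 1\le i\le\ell\}$. A rectangle is a set $c+\mathrm{Rec}(a)$ with $c,a\in\mathbb{Z}^\ell\times\Gamma$;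 it can be written uniquely with $c\in\mathbb{Z}^\ell\times\{0_\Gamma\}$ (center) and $a\in\mathbb{N}^\ell\times\{0_\Gamma\}$ (radius vector $\mathrm{L}(A)$, entries $\mathrm{L}_i(A)$). Centered means center $\mathbf{0}$. $A\sqsubseteq B$ means $\mathrm{L}_i(A)\le\mathrm{L}_i(B)$ for all $i$. For $\lambda>0$, $\lambda\cdot A=c+\mathrm{Rec}(\lambda\cdot\mathrm{L}(A))$ with $c$ the center of $A$. Sums of sets/vectors are elementwise. Charts: a chart for $G$ is $\Phi=(\ell,\phi,\mathcal{Z},\Gamma,\mathcal{H})$ with $\mathcal{H}$ a finite collection of pairwise conjugate subgroups of $G$, $\Gamma$ finite abelian, $\mathcal{Z}$ a centered rectangle with all $\mathrm{L}_i(\mathcal{Z})>0$, $\phi$ an injective map into $G$ with $\mathrm{dom}(\phi)$ a centered rectangle containing $3\cdot\mathcal{Z}$, $\phi(\mathbf{0})=1_G$, and for all $r,s\in\mathrm{dom}(\phi)$, $H\in\mathcal{H}$: $\phi(r)H=\phi(s)H\Rightarrow r=s$; $r+s+\mathcal{Z}\subseteq\mathrm{dom}(\phi)\Rightarrow\exists z\in\mathcal{Z}:\phi(r)\phi(s)H=\phi(r+s+z)H$; $r-s+\mathcal{Z}\subseteq\mathrm{dom}(\phi)\Rightarrow\exists z\in\mathcal{Z}:\phi(r)\phi(s)^{-1}H=\phi(r-s+z)H$; $-r+s+\mathcal{Z}\subseteq\mathrm{dom}(\phi)\Rightarrow\exists z\in\mathcal{Z}:\phi(r)^{-1}\phi(s)H=\phi(-r+s+z)H$;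 $-s+\mathcal{Z}\subseteq\mathrm{dom}(\phi)\Rightarrow\exists z\in\mathcal{Z}:\phi(s)^{-1}H=\phi(-s+z)H$. For $S\subseteq\mathrm{dom}(\phi)$, $\phi(S)\cdot x=\{\phi(s)\cdot x:s\in S\}$. $X^{\mathcal{H}}=\{x\in X:\mathrm{Stab}(x)\in\mathcal{H}\}$. Rough rectangles: for a rectangle $A$ with $2\cdot A\subseteq\mathrm{dom}(\phi)$, $x\in X^{\mathcal{H}}$ and $0<\epsilon<1$, a set $R\subseteq X$ is $(\Phi,\epsilon)$-roughly $A$ at $x$ if $2\cdot\mathcal{Z}\sqsubseteq\epsilon\cdot A$ and $\phi((1-\epsilon)\cdot A)\cdot x\subseteq R\subseteq\phi((1+\epsilon)\cdot A)\cdot x$. *)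

theory Defs
  imports Complex_Main "HOL-Library.Countable_Set" "HOL-Algebra.Group_Action"
begin

text \<open>An element of Z^l x Gamma is a pair (b, g) with b :: nat => int and g in the finite
abelian group Gamma (a type of class finite, ab_group_add); the coordinates b i for i >= l
are required to be 0 (see zspace).\<close>

type_synonym 'c zvec = "(nat \<Rightarrow> int) \<times> 'c"

definition zspace :: "nat \<Rightarrow> ('c::ab_group_add) zvec set" where
  "zspace l = {(b, g). \<forall>i\<ge>l. b i = 0}"

definition vadd :: "('c::ab_group_add) zvec \<Rightarrow> 'c zvec \<Rightarrow> 'c zvec" where
  "vadd v w = (\<lambda>i. fst v i + fst w i, snd v + snd w)"

definition vneg :: "('c::ab_group_add) zvec \<Rightarrow> 'c zvec" where
  "vneg v = (\<lambda>i. - fst v i, - snd v)"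

definition vzero :: "('c::ab_group_add) zvec" where
  "vzero = (\<lambda>i. 0, 0)"

definition translate :: "('c::ab_group_add) zvec set \<Rightarrow> 'c zvec \<Rightarrow> 'c zvec set" where
  "translate A v = (\<lambda>a. vadd a v) ` A"

definition msum :: "('c::ab_group_add) zvec set \<Rightarrow> 'c zvec set \<Rightarrow> 'c zvec set" where
  "msum A B = {vadd a b | a b. a \<in> A \<and> b \<in> B}"

text \<open>c + Rec(a) for a center c in Z^l x {0} (given by its integer part) and a radius
vector a in R^l.\<close>
definition rect :: "nat \<Rightarrow> (nat \<Rightarrow> int) \<Rightarrow> (nat \<Rightarrow> real) \<Rightarrow> ('c::ab_group_add) zvec set" where
  "rect l c a = {(b, g). (\<forall>i<l. \<bar>real_of_int (b i - c i)\<bar> \<le> \<bar>a i\<bar>) \<and> (\<forall>i\<ge>l. b i = 0)}"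

definition rect_cr :: "nat \<Rightarrow> ('c::ab_group_add) zvec set \<Rightarrow> (nat \<Rightarrow> int) \<Rightarrow> (nat \<Rightarrow> nat) \<Rightarrow> bool" where
  "rect_cr l A c L \<longleftrightarrow> (\<forall>i\<ge>l. c i = 0 \<and> L i = 0) \<and> A = rect l c (\<lambda>i. real (L i))"

definition is_rect :: "nat \<Rightarrow> ('c::ab_group_add) zvec set \<Rightarrow> bool" where
  "is_rect l A \<longleftrightarrow> (\<exists>c L. rect_cr l A c L)"

definition centered_rect :: "nat \<Rightarrow> ('c::ab_group_add) zvec set \<Rightarrow> bool" where
  "centered_rect l A \<longleftrightarrow> (\<exists>L. rect_cr l A (\<lambda>i. 0) L)"

definition rscale :: "nat \<Rightarrow> real \<Rightarrow> ('c::ab_group_add) zvec set \<Rightarrow> 'c zvec set" where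
  "rscale l t A = (THE B. \<exists>c L. rect_cr l A c L \<and> B = rect l c (\<lambda>i. t * real (L i)))"

definition rsub :: "nat \<Rightarrow> ('c::ab_group_add) zvec set \<Rightarrow> 'c zvec set \<Rightarrow> bool" where
  "rsub l A B \<longleftrightarrow> (\<exists>cA LA cB LB. rect_cr l A cA LA \<and> rect_cr l B cB LB \<and> (\<forall>i<l. LA i \<le> LB i))"

definition act_img :: "('g \<Rightarrow> 'x \<Rightarrow> 'x) \<Rightarrow> ('c zvec \<Rightarrow> 'g) \<Rightarrow> 'c zvec set \<Rightarrow> 'x \<Rightarrow> 'x set" where
  "act_img act phi S x = {act (phi s) x | s. s \<in> S}"

text \<open>Chart (l, phi, Z, Gamma, H) for G, with dom(phi) = D; Gamma is the type 'c.\<close>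
definition chart ::
  "('g, 'm) monoid_scheme \<Rightarrow> nat \<Rightarrow> (('c::{finite,ab_group_add}) zvec \<Rightarrow> 'g) \<Rightarrow> 'c zvec set
     \<Rightarrow> 'c zvec set \<Rightarrow> 'g set set \<Rightarrow> bool" where
  "chart G l phi D Z \<H> \<longleftrightarrow>
     finite \<H> \<and> (\<forall>H\<in>\<H>. subgroup H G) \<and>
     (\<forall>H1\<in>\<H>. \<forall>H2\<in>\<H>. \<exists>g\<in>carrier G. H2 = {g \<otimes>\<^bsub>G\<^esub> h \<otimes>\<^bsub>G\<^esub> inv\<^bsub>G\<^esub> g | h. h \<in> H1}) \<and>
     (\<exists>LZ. rect_cr l Z (\<lambda>i. 0) LZ \<and> (\<forall>i<l. 0 < LZ i)) \<and>
     centered_rect l D \<and> rscale l 3 Z \<subseteq> D \<and>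
     inj_on phi D \<and> phi ` D \<subseteq> carrier G \<and> phi vzero = \<one>\<^bsub>G\<^esub> \<and>
     (\<forall>r\<in>D. \<forall>s\<in>D. \<forall>H\<in>\<H>.
        (phi r <#\<^bsub>G\<^esub> H = phi s <#\<^bsub>G\<^esub> H \<longrightarrow> r = s) \<and>
        (translate Z (vadd r s) \<subseteq> D \<longrightarrow>
           (\<exists>z\<in>Z. (phi r \<otimes>\<^bsub>G\<^esub> phi s) <#\<^bsub>G\<^esub> H = phi (vadd (vadd r s) z) <#\<^bsub>G\<^esub> H)) \<and>
        (translate Z (vadd r (vneg s)) \<subseteq> D \<longrightarrow>
           (\<exists>z\<in>Z. (phi r \<otimes>\<^bsub>G\<^esub> inv\<^bsub>G\<^esub> phi s) <#\<^bsub>G\<^esub> H = phi (vadd (vadd r (vneg s)) z) <#\<^bsub>G\<^esub> H)) \<and>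
        (translate Z (vadd (vneg r) s) \<subseteq> D \<longrightarrow>
           (\<exists>z\<in>Z. (inv\<^bsub>G\<^esub> phi r \<otimes>\<^bsub>G\<^esub> phi s) <#\<^bsub>G\<^esub> H = phi (vadd (vadd (vneg r) s) z) <#\<^bsub>G\<^esub> H)) \<and>
        (translate Z (vneg s) \<subseteq> D \<longrightarrow>
           (\<exists>z\<in>Z. (inv\<^bsub>G\<^esub> phi s) <#\<^bsub>G\<^esub> H = phi (vadd (vneg s) z) <#\<^bsub>G\<^esub> H)))"

definition XH :: "('g, 'm) monoid_scheme \<Rightarrow> ('g \<Rightarrow> 'x \<Rightarrow> 'x) \<Rightarrow> 'x set \<Rightarrow> 'g set set \<Rightarrow> 'x set" where
  "XH G act X \<H> = {x \<in> X. stabilizer G act x \<in> \<H>}"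

definition roughly ::
  "('g, 'm) monoid_scheme \<Rightarrow> ('g \<Rightarrow> 'x \<Rightarrow> 'x) \<Rightarrow> 'x set \<Rightarrow> nat \<Rightarrow> (('c::{finite,ab_group_add}) zvec \<Rightarrow> 'g)
     \<Rightarrow> 'c zvec set \<Rightarrow> 'c zvec set \<Rightarrow> 'g set set \<Rightarrow> real \<Rightarrow> 'c zvec set \<Rightarrow> 'x \<Rightarrow> 'x set \<Rightarrow> bool" where
  "roughly G act X l phi D Z \<H> eps A x R \<longleftrightarrow>
     is_rect l A \<and> rscale l 2 A \<subseteq> D \<and> x \<in> XH G act X \<H> \<and> 0 < eps \<and> eps < 1 \<and>
     rsub l (rscale l 2 Z) (rscale l eps A) \<and>
     act_img act phi (rscale l (1 - eps) A) x \<subseteq> R \<and> R \<subseteq> act_img act phi (rscale l (1 + eps) A) x"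

end

theory Submission
  imports Defs
begin

text \<open>Suppose \<open>y = \<phi>(w)\<cdot>x\<close>. Because the stabiliser of \<open>x\<close> lies in \<open>\<H>\<close>, its cosets determine the action
on \<open>x\<close>, so the chart's approximate multiplication rule gives \<open>\<phi>(s)\<cdot>y = \<phi>(s+w+z)\<cdot>x\<close> for some
\<open>z \<in> \<Z>\<close>. For \<open>s \<in> (1-2\<epsilon>)(A-w)\<close> the error \<open>z\<close> is absorbed thanks to \<open>2\<Z> \<sqsubseteq> \<epsilon>A\<close>, so
\<open>s+w+z \<in> (1-\<epsilon>)A\<close>; symmetrically, the division rule writes every \<open>\<phi>(t)\<cdot>x\<close> with \<open>t \<in> (1+\<epsilon>)A\<close>
as \<open>\<phi>(t-w+z)\<cdot>y\<close> with \<open>t-w+z \<in> (1+2\<epsilon>)(A-w)\<close>. The hypothesis \<open>(M+2)A + 4\<Z> \<subseteq> dom(\<phi>)\<close>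
keeps every point met on the way inside the chart domain. Part (i) is the case \<open>w = u\<close>; in part (ii)
\<open>y = \<phi>(v)\<inverse>\<cdot>x\<close> plays the role of \<open>\<phi>(-v)\<cdot>x\<close>, so \<open>w = -v\<close> and the two rules swap roles.\<close>

lemma mem_rect_iff:
  "w \<in> rect l c r \<longleftrightarrow> (\<forall>i<l. \<bar>real_of_int (fst w i - c i)\<bar> \<le> \<bar>r i\<bar>) \<and> (\<forall>i\<ge>l. fst w i = 0)"
  by (cases w) (simp add: rect_def)

lemma fst_vadd [simp]: "fst (vadd v w) i = fst v i + fst w i"
  by (simp add: vadd_def)

lemma fst_vneg [simp]: "fst (vneg v) i = - fst v i"
  by (simp add: vneg_def)

lemma vneg_vneg [simp]: "vneg (vneg v) = v"
  by (simp add: vneg_def)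

lemma vadd_commute: "vadd v w = vadd w v"
  by (simp add: vadd_def add.commute)

lemma rect_subset_rectI:
  assumes "\<And>i. i < l \<Longrightarrow> \<bar>real_of_int (c i - c' i)\<bar> + \<bar>r i\<bar> \<le> \<bar>r' i\<bar>"
  shows "rect l c r \<subseteq> rect l c' r'"
proof
  fix w assume w: "w \<in> rect l c r"
  have "\<bar>real_of_int (fst w i - c' i)\<bar> \<le> \<bar>r' i\<bar>" if "i < l" for i
  proof -
    have "\<bar>real_of_int (fst w i - c' i)\<bar> \<le> \<bar>real_of_int (fst w i - c i)\<bar> + \<bar>real_of_int (c i - c' i)\<bar>"
      by linarith
    then show ?thesis using w assms[OF that] that unfolding mem_rect_iff by fastforce
  qed
  then show "w \<in> rect l c' r'" using w unfolding mem_rect_iff by blast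
qed

lemma rect_corner_mem:
  fixes s :: int
  assumes "i < l" "\<bar>s\<bar> \<le> 1"
  shows "((\<lambda>j. if j = i then c i + s * \<lfloor>\<bar>r i\<bar>\<rfloor> else if j < l then c j else 0), g) \<in> rect l c r"
proof -
  have "\<bar>s * \<lfloor>\<bar>r i\<bar>\<rfloor>\<bar> \<le> \<lfloor>\<bar>r i\<bar>\<rfloor>"
    using assms(2) by (simp add: abs_mult mult_left_le_one_le)
  then have "\<bar>real_of_int (s * \<lfloor>\<bar>r i\<bar>\<rfloor>)\<bar> \<le> \<bar>r i\<bar>"
    by (simp only: le_floor_iff of_int_abs)
  then show ?thesis using assms(1) unfolding mem_rect_iff by auto
qed

lemma rect_subset_rectD:
  assumes "rect l c r \<subseteq> rect l c' r'" "i < l"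
  shows "\<bar>real_of_int (c i - c' i)\<bar> + real_of_int \<lfloor>\<bar>r i\<bar>\<rfloor> \<le> \<bar>r' i\<bar>"
proof -
  define s :: int where "s = (if c' i \<le> c i then 1 else -1)"
  have s: "\<bar>s\<bar> \<le> 1" by (simp add: s_def)
  have "((\<lambda>j. if j = i then c i + s * \<lfloor>\<bar>r i\<bar>\<rfloor> else if j < l then c j else 0), 0::'a::ab_group_add)
      \<in> rect l c' r'"
    using assms(1) rect_corner_mem[OF assms(2) s] by blast
  then have "\<bar>real_of_int (c i + s * \<lfloor>\<bar>r i\<bar>\<rfloor> - c' i)\<bar> \<le> \<bar>r' i\<bar>"
    using assms(2) unfolding mem_rect_iff by auto
  moreover have "0 \<le> \<lfloor>\<bar>r i\<bar>\<rfloor>" by simp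
  ultimately show ?thesis by (cases "c' i \<le> c i") (auto simp: s_def)
qed

lemma msum_rect_subset_rectD:
  assumes "msum (rect l c r) (rect l c' r') \<subseteq> rect l d r''" "i < l"
  shows "\<bar>real_of_int (c i + c' i - d i)\<bar> + real_of_int \<lfloor>\<bar>r i\<bar>\<rfloor> + real_of_int \<lfloor>\<bar>r' i\<bar>\<rfloor> \<le> \<bar>r'' i\<bar>"
proof -
  define s :: int where "s = (if d i \<le> c i + c' i then 1 else -1)"
  have s: "\<bar>s\<bar> \<le> 1" by (simp add: s_def)
  have "vadd ((\<lambda>j. if j = i then c i + s * \<lfloor>\<bar>r i\<bar>\<rfloor> else if j < l then c j else 0), 0::'a::ab_group_add)
      ((\<lambda>j. if j = i then c' i + s * \<lfloor>\<bar>r' i\<bar>\<rfloor> else if j < l then c' j else 0), 0) \<in> rect l d r''"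
    using assms(1) rect_corner_mem[OF assms(2) s] unfolding msum_def by blast
  then have "\<bar>real_of_int (c i + s * \<lfloor>\<bar>r i\<bar>\<rfloor> + (c' i + s * \<lfloor>\<bar>r' i\<bar>\<rfloor>) - d i)\<bar> \<le> \<bar>r'' i\<bar>"
    using assms(2) unfolding mem_rect_iff by auto
  moreover have "0 \<le> \<lfloor>\<bar>r i\<bar>\<rfloor>" "0 \<le> \<lfloor>\<bar>r' i\<bar>\<rfloor>" by simp_all
  ultimately show ?thesis by (cases "d i \<le> c i + c' i") (auto simp: s_def algebra_simps)
qed

lemma rect_cr_unique:
  assumes "rect_cr l A c L" "rect_cr l A c' L'"
  shows "c' = c \<and> L' = L"
proof -
  have A: "rect l c (\<lambda>i. real (L i)) = A" "rect l c' (\<lambda>i. real (L' i)) = A"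
    and beyond: "\<forall>i\<ge>l. c i = 0 \<and> L i = 0" "\<forall>i\<ge>l. c' i = 0 \<and> L' i = 0"
    using assms unfolding rect_cr_def by auto
  have "c' i = c i \<and> L' i = L i" if "i < l" for i
    using rect_subset_rectD[of l c _ c' _ i] rect_subset_rectD[of l c' _ c _ i] A that
    by (fastforce simp: abs_minus_commute)
  then show ?thesis using beyond by (metis ext not_le)
qed

lemma rscale_rect:
  assumes "rect_cr l A c L"
  shows "rscale l t A = rect l c (\<lambda>i. t * real (L i))"
  unfolding rscale_def by (rule the_equality) (use assms rect_cr_unique[OF assms] in blast)+

lemma rect_floor_radius: "rect l c r = rect l c (\<lambda>i. real (nat \<lfloor>\<bar>r i\<bar>\<rfloor>))"
proof -
  have "(\<bar>real_of_int k\<bar> \<le> \<bar>r i\<bar>) = (\<bar>real_of_int k\<bar> \<le> \<bar>real (nat \<lfloor>\<bar>r i\<bar>\<rfloor>)\<bar>)" for k i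
  proof -
    have "(\<bar>real_of_int k\<bar> \<le> \<bar>r i\<bar>) \<longleftrightarrow> \<bar>k\<bar> \<le> \<lfloor>\<bar>r i\<bar>\<rfloor>" by (simp add: le_floor_iff)
    also have "\<dots> \<longleftrightarrow> real_of_int \<bar>k\<bar> \<le> real_of_int \<lfloor>\<bar>r i\<bar>\<rfloor>" by (simp only: of_int_le_iff)
    finally show ?thesis by simp
  qed
  then show ?thesis unfolding rect_def by (simp only:)
qed

lemma rect_cr_rscale:
  assumes "rect_cr l A c L"
  shows "rect_cr l (rscale l t A) c (\<lambda>i. nat \<lfloor>\<bar>t * real (L i)\<bar>\<rfloor>)"
  using assms rect_floor_radius[of l c "\<lambda>i. t * real (L i)"]
  unfolding rscale_rect[OF assms] by (auto simp: rect_cr_def)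

lemma rsub_iff:
  assumes "rect_cr l A cA LA" "rect_cr l B cB LB"
  shows "rsub l A B \<longleftrightarrow> (\<forall>i<l. LA i \<le> LB i)"
  using assms rect_cr_unique[OF assms(1)] rect_cr_unique[OF assms(2)] unfolding rsub_def by metis

lemma rsub_rscale_iff:
  assumes "rect_cr l Z cZ LZ" "rect_cr l A c L" "0 \<le> t"
  shows "rsub l (rscale l (real k) Z) (rscale l t A) \<longleftrightarrow> (\<forall>i<l. real k * real (LZ i) \<le> t * real (L i))"
proof -
  have "nat \<lfloor>\<bar>real k * real (LZ i)\<bar>\<rfloor> \<le> nat \<lfloor>\<bar>t * real (L i)\<bar>\<rfloor>
      \<longleftrightarrow> real k * real (LZ i) \<le> t * real (L i)" for i
  proof -
    have "\<bar>real k * real (LZ i)\<bar> = real (k * LZ i)" by simp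
    moreover have "0 \<le> t * real (L i)" using assms(3) by simp
    ultimately show ?thesis by (simp add: le_nat_iff le_floor_iff)
  qed
  then show ?thesis
    by (simp only: rsub_iff[OF rect_cr_rscale[OF assms(1)] rect_cr_rscale[OF assms(2)]])
qed

lemma translate_rect:
  fixes v :: "('c::ab_group_add) zvec"
  assumes "\<forall>j\<ge>l. fst v j = 0"
  shows "translate (rect l c r) v = rect l (\<lambda>i. c i + fst v i) r"
proof
  show "translate (rect l c r) v \<subseteq> rect l (\<lambda>i. c i + fst v i) r"
    using assms by (auto simp: translate_def mem_rect_iff algebra_simps)
  show "rect l (\<lambda>i. c i + fst v i) r \<subseteq> translate (rect l c r) v"
  proof
    fix b :: "'c zvec" assume b: "b \<in> rect l (\<lambda>i. c i + fst v i) r"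
    have "b = vadd (vadd b (vneg v)) v" by (simp add: vadd_def vneg_def)
    moreover have "vadd b (vneg v) \<in> rect l c r"
      using b assms by (auto simp: mem_rect_iff algebra_simps)
    ultimately show "b \<in> translate (rect l c r) v" unfolding translate_def by blast
  qed
qed

lemma rect_cr_translate:
  assumes "rect_cr l A c L" "\<forall>j\<ge>l. fst v j = 0"
  shows "rect_cr l (translate A v) (\<lambda>i. c i + fst v i) L"
  using assms(1) translate_rect[OF assms(2)] assms(2) unfolding rect_cr_def by simp

lemma vadd_mem_rect:
  assumes "a \<in> rect l c r" "b \<in> rect l c' r'"
  shows "vadd a b \<in> rect l (\<lambda>i. c i + c' i) (\<lambda>i. \<bar>r i\<bar> + \<bar>r' i\<bar>)"
  unfolding mem_rect_iff
proof (intro conjI allI impI)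
  fix i assume "i < l"
  then have "\<bar>real_of_int (fst a i - c i)\<bar> \<le> \<bar>r i\<bar>" "\<bar>real_of_int (fst b i - c' i)\<bar> \<le> \<bar>r' i\<bar>"
    using assms unfolding mem_rect_iff by blast+
  then show "\<bar>real_of_int (fst (vadd a b) i - (c i + c' i))\<bar> \<le> \<bar>\<bar>r i\<bar> + \<bar>r' i\<bar>\<bar>"
    by simp
next
  fix i assume "l \<le> i"
  then show "fst (vadd a b) i = 0" using assms unfolding mem_rect_iff by simp
qed

lemma translate_subset_rect:
  assumes "v \<in> rect l c r"
  shows "translate (rect l c' r') v \<subseteq> rect l (\<lambda>i. c' i + c i) (\<lambda>i. \<bar>r' i\<bar> + \<bar>r i\<bar>)"
  using vadd_mem_rect[OF _ assms] unfolding translate_def by blast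

lemma mem_rect_self:
  assumes "\<forall>j\<ge>l. fst v j = 0"
  shows "v \<in> rect l (fst v) r"
  using assms unfolding mem_rect_iff by simp

lemma rscale_subset_of_box:
  assumes "centered_rect l Z" "is_rect l A" "msum (rscale l (real M + 2) A) (rscale l 4 Z) \<subseteq> D"
  shows "rscale l (real M) A \<subseteq> D"
proof
  fix a assume a: "a \<in> rscale l (real M) A"
  obtain c L where A: "rect_cr l A c L" using assms(2) by (auto simp: is_rect_def)
  obtain LZ where LZ: "rect_cr l Z (\<lambda>i. 0) LZ" using assms(1) by (auto simp: centered_rect_def)
  have "rect l c (\<lambda>i. real M * real (L i)) \<subseteq> rect l c (\<lambda>i. (real M + 2) * real (L i))"
    by (rule rect_subset_rectI) (simp add: algebra_simps)
  then have "a \<in> rscale l (real M + 2) A" using a by (auto simp: rscale_rect[OF A])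
  moreover have "(\<lambda>i. 0, 0) \<in> rscale l 4 Z" by (simp add: rscale_rect[OF LZ] mem_rect_iff)
  moreover have "a = vadd a (\<lambda>i. 0, 0)" by (simp add: vadd_def)
  ultimately show "a \<in> D" using assms(3) unfolding msum_def by blast
qed

lemma vneg_mem_centered_rect:
  assumes "centered_rect l D" "v \<in> D"
  shows "vneg v \<in> D"
  using assms by (auto simp: centered_rect_def rect_cr_def mem_rect_iff)

locale rough_shift =
  fixes l :: nat and A Z D :: "('c::ab_group_add) zvec set"
    and c :: "nat \<Rightarrow> int" and L LZ LD :: "nat \<Rightarrow> nat" and eps :: real and M :: nat
    and w :: "'c zvec"
  assumes A: "rect_cr l A c L" and Z: "rect_cr l Z (\<lambda>i. 0) LZ" and D: "rect_cr l D (\<lambda>i. 0) LD"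
    and eps: "0 < eps" "eps < 1/2"
    and Z_small: "\<And>i. i < l \<Longrightarrow> 2 * real (LZ i) \<le> eps * real (L i)"
    and D_large: "\<And>i. i < l \<Longrightarrow>
      \<bar>real_of_int (c i)\<bar> + (real M + 2) * real (L i) + 4 * real (LZ i) \<le> real (LD i)"
    and w: "w \<in> rscale l (real M) A"
begin

lemma w_near_center: "i < l \<Longrightarrow> \<bar>real_of_int (c i - fst w i)\<bar> \<le> real M * real (L i)"
  using w unfolding rscale_rect[OF A] mem_rect_iff by (simp add: abs_minus_commute)

lemma w_vanishes: "\<forall>j\<ge>l. fst w j = 0"
  using w unfolding rscale_rect[OF A] mem_rect_iff by simp

lemma rect_cr_shifted: "rect_cr l (translate A (vneg w)) (\<lambda>i. c i - fst w i) L"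
  using rect_cr_translate[OF A, of "vneg w"] w_vanishes by simp

lemma rscale_shifted: "rscale l t (translate A (vneg w)) = rect l (\<lambda>i. c i - fst w i) (\<lambda>i. t * real (L i))"
  by (rule rscale_rect[OF rect_cr_shifted])

lemma rect_subset_D:
  assumes "\<And>i. i < l \<Longrightarrow> \<bar>real_of_int (d i)\<bar> + \<bar>r i\<bar> \<le> real (LD i)"
  shows "rect l d r \<subseteq> D"
proof -
  have "D = rect l (\<lambda>i. 0) (\<lambda>i. real (LD i))" using D unfolding rect_cr_def by simp
  then show ?thesis using assms by (simp add: rect_subset_rectI)
qed

lemma radius_abs: "0 \<le> t \<Longrightarrow> \<bar>t * real (L i)\<bar> = t * real (L i)"
  by (simp add: abs_mult)

lemma coordinate_bounds:
  assumes "i < l"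
  shows "0 \<le> eps * real (L i)" "2 * real (LZ i) \<le> eps * real (L i)"
    "2 * (eps * real (L i)) \<le> real (L i)"
    "\<bar>real_of_int (c i)\<bar> + 2 * real (L i) + real (LZ i) \<le> real (LD i)"
    "\<bar>real_of_int (c i - fst w i)\<bar> + 2 * real (L i) + real (LZ i) \<le> real (LD i)"
proof -
  have "(2 * eps) * real (L i) \<le> 1 * real (L i)" by (rule mult_right_mono) (use eps in auto)
  then show "2 * (eps * real (L i)) \<le> real (L i)" by (simp add: mult.assoc)
  have "0 \<le> real M * real (L i)" "0 \<le> real (LZ i)" by simp_all
  then show "\<bar>real_of_int (c i)\<bar> + 2 * real (L i) + real (LZ i) \<le> real (LD i)"
    and "\<bar>real_of_int (c i - fst w i)\<bar> + 2 * real (L i) + real (LZ i) \<le> real (LD i)"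
    using D_large[OF assms] w_near_center[OF assms] abs_ge_zero[of "real_of_int (c i)"]
    by (simp_all add: algebra_simps)
qed (use eps Z_small[OF assms] in auto)

lemma shifted_subset_D:
  assumes "0 \<le> t" "t \<le> 2"
  shows "rscale l t (translate A (vneg w)) \<subseteq> D"
  unfolding rscale_shifted
proof (rule rect_subset_D)
  fix i assume i: "i < l"
  have "t * real (L i) \<le> 2 * real (L i)" using assms(2) by (simp add: mult_right_mono)
  moreover have "0 \<le> real (LZ i)" by simp
  ultimately show "\<bar>real_of_int (c i - fst w i)\<bar> + \<bar>t * real (L i)\<bar> \<le> real (LD i)"
    using coordinate_bounds(5)[OF i] radius_abs[OF assms(1), of i] by linarith
qed

lemma inner_shift:
  assumes s: "s \<in> rscale l (1 - 2 * eps) (translate A (vneg w))"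
  shows "s \<in> D" and "translate Z (vadd s w) \<subseteq> D"
    and "z \<in> Z \<Longrightarrow> vadd (vadd s w) z \<in> rscale l (1 - eps) A"
proof -
  have r: "\<bar>(1 - 2 * eps) * real (L i)\<bar> = (1 - 2 * eps) * real (L i)" for i
    using eps by (simp add: radius_abs)
  have Z_rect: "Z = rect l (\<lambda>i. 0) (\<lambda>i. real (LZ i))" using Z by (simp add: rect_cr_def)
  show "s \<in> D" using s shifted_subset_D[of "1 - 2 * eps"] eps by auto
  have "vadd s w \<in> rect l (\<lambda>i. c i - fst w i + fst w i) (\<lambda>i. \<bar>(1 - 2 * eps) * real (L i)\<bar> + \<bar>0\<bar>)"
    using vadd_mem_rect[OF s[unfolded rscale_shifted] mem_rect_self[OF w_vanishes]] .
  then have sw: "vadd s w \<in> rect l c (\<lambda>i. (1 - 2 * eps) * real (L i))"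
    by (simp add: r)
  have "translate Z (vadd s w) \<subseteq> rect l c (\<lambda>i. real (LZ i) + (1 - 2 * eps) * real (L i))"
    using translate_subset_rect[OF sw, of "\<lambda>i. 0" "\<lambda>i. real (LZ i)"] r by (simp add: Z_rect)
  also have "\<dots> \<subseteq> D"
  proof (rule rect_subset_D)
    fix i assume i: "i < l"
    show "\<bar>real_of_int (c i)\<bar> + \<bar>real (LZ i) + (1 - 2 * eps) * real (L i)\<bar> \<le> real (LD i)"
      using coordinate_bounds[OF i] by (simp add: algebra_simps)
  qed
  finally show "translate Z (vadd s w) \<subseteq> D" .
  assume "z \<in> Z"
  then have "vadd (vadd s w) z \<in> rect l c (\<lambda>i. (1 - 2 * eps) * real (L i) + real (LZ i))"
    using vadd_mem_rect[OF sw, of z "\<lambda>i. 0" "\<lambda>i. real (LZ i)"] r by (simp add: Z_rect)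
  also have "\<dots> \<subseteq> rscale l (1 - eps) A"
    unfolding rscale_rect[OF A]
  proof (rule rect_subset_rectI)
    fix i assume i: "i < l"
    show "\<bar>real_of_int (c i - c i)\<bar> + \<bar>(1 - 2 * eps) * real (L i) + real (LZ i)\<bar>
        \<le> \<bar>(1 - eps) * real (L i)\<bar>"
      using coordinate_bounds[OF i] by (simp add: algebra_simps)
  qed
  finally show "vadd (vadd s w) z \<in> rscale l (1 - eps) A" .
qed

lemma outer_shift:
  assumes t: "t \<in> rscale l (1 + eps) A"
  shows "t \<in> D" and "translate Z (vadd t (vneg w)) \<subseteq> D"
    and "z \<in> Z \<Longrightarrow> vadd (vadd t (vneg w)) z \<in> rscale l (1 + 2 * eps) (translate A (vneg w))"
proof -
  have r: "\<bar>(1 + eps) * real (L i)\<bar> = (1 + eps) * real (L i)" for i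
    using eps by (simp add: radius_abs)
  have Z_rect: "Z = rect l (\<lambda>i. 0) (\<lambda>i. real (LZ i))" using Z by (simp add: rect_cr_def)
  have tA: "t \<in> rect l c (\<lambda>i. (1 + eps) * real (L i))" using t by (simp add: rscale_rect[OF A])
  have "rect l c (\<lambda>i. (1 + eps) * real (L i)) \<subseteq> D"
  proof (rule rect_subset_D)
    fix i assume "i < l"
    from coordinate_bounds[OF this]
    show "\<bar>real_of_int (c i)\<bar> + \<bar>(1 + eps) * real (L i)\<bar> \<le> real (LD i)"
      by (simp add: r algebra_simps)
  qed
  then show "t \<in> D" using tA by blast
  have "vneg w \<in> rect l (fst (vneg w)) (\<lambda>i. 0)" using w_vanishes by (simp add: mem_rect_self)
  from vadd_mem_rect[OF tA this]
  have tw: "vadd t (vneg w) \<in> rect l (\<lambda>i. c i - fst w i) (\<lambda>i. (1 + eps) * real (L i))"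
    by (simp add: r)
  have "translate Z (vadd t (vneg w))
      \<subseteq> rect l (\<lambda>i. c i - fst w i) (\<lambda>i. real (LZ i) + (1 + eps) * real (L i))"
    using translate_subset_rect[OF tw, of "\<lambda>i. 0" "\<lambda>i. real (LZ i)"] r by (simp add: Z_rect)
  also have "\<dots> \<subseteq> D"
  proof (rule rect_subset_D)
    fix i assume "i < l"
    from coordinate_bounds[OF this]
    show "\<bar>real_of_int (c i - fst w i)\<bar> + \<bar>real (LZ i) + (1 + eps) * real (L i)\<bar> \<le> real (LD i)"
      by (simp add: algebra_simps)
  qed
  finally show "translate Z (vadd t (vneg w)) \<subseteq> D" .
  assume "z \<in> Z"
  then have "vadd (vadd t (vneg w)) z
      \<in> rect l (\<lambda>i. c i - fst w i) (\<lambda>i. (1 + eps) * real (L i) + real (LZ i))"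
    using vadd_mem_rect[OF tw, of z "\<lambda>i. 0" "\<lambda>i. real (LZ i)"] r by (simp add: Z_rect)
  also have "\<dots> \<subseteq> rscale l (1 + 2 * eps) (translate A (vneg w))"
    unfolding rscale_shifted
  proof (rule rect_subset_rectI)
    fix i assume "i < l"
    from coordinate_bounds[OF this]
    show "\<bar>real_of_int (c i - fst w i - (c i - fst w i))\<bar> + \<bar>(1 + eps) * real (L i) + real (LZ i)\<bar>
        \<le> \<bar>(1 + 2 * eps) * real (L i)\<bar>"
      by (simp add: algebra_simps)
  qed
  finally show "vadd (vadd t (vneg w)) z \<in> rscale l (1 + 2 * eps) (translate A (vneg w))" .
qed

end

lemma rough_shift_of_roughly:
  assumes rough: "roughly G act X l phi D Z \<H> eps A x R" and "eps < 1/2"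
    and A: "rect_cr l A c L" and LZ: "rect_cr l Z (\<lambda>i. 0) LZ" and LD: "rect_cr l D (\<lambda>i. 0) LD"
    and box: "msum (rscale l (real M + 2) A) (rscale l 4 Z) \<subseteq> D"
    and "w \<in> rscale l (real M) A"
  shows "rough_shift l A Z D c L LZ LD eps M w"
proof
  show eps: "0 < eps" using rough by (simp add: roughly_def)
  show "2 * real (LZ i) \<le> eps * real (L i)" if "i < l" for i
    using rough rsub_rscale_iff[OF LZ A, of eps 2] eps that by (simp add: roughly_def)
  show "\<bar>real_of_int (c i)\<bar> + (real M + 2) * real (L i) + 4 * real (LZ i) \<le> real (LD i)"
    if i: "i < l" for i
  proof -
    have D_rect: "D = rect l (\<lambda>i. 0) (\<lambda>i. real (LD i))" using LD by (simp add: rect_cr_def)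
    have "(real M + 2) * real (L i) = real ((M + 2) * L i)" "4 * real (LZ i) = real (4 * LZ i)"
      by (simp_all add: algebra_simps)
    with msum_rect_subset_rectD[OF box[unfolded rscale_rect[OF A] rscale_rect[OF LZ] D_rect] i]
    show ?thesis by (simp only: abs_of_nat floor_of_nat)
  qed
qed (use assms in auto)

lemma roughly_transfer:
  assumes rough: "roughly G act X l phi D Z \<H> eps A x R" and "eps < 1/2"
    and Z: "centered_rect l Z" and D: "centered_rect l D"
    and box: "msum (rscale l (real M + 2) A) (rscale l 4 Z) \<subseteq> D"
    and w: "w \<in> rscale l (real M) A" and y: "y \<in> XH G act X \<H>"
    and inner: "\<And>s. s \<in> D \<Longrightarrow> translate Z (vadd s w) \<subseteq> D \<Longrightarrow>
      \<exists>z\<in>Z. act (phi s) y = act (phi (vadd (vadd s w) z)) x"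
    and outer: "\<And>t. t \<in> D \<Longrightarrow> translate Z (vadd t (vneg w)) \<subseteq> D \<Longrightarrow>
      \<exists>z\<in>Z. act (phi t) x = act (phi (vadd (vadd t (vneg w)) z)) y"
  shows "roughly G act X l phi D Z \<H> (2 * eps) (translate A (vneg w)) y R"
proof -
  obtain c L where A: "rect_cr l A c L" using rough by (auto simp: roughly_def is_rect_def)
  obtain LZ where LZ: "rect_cr l Z (\<lambda>i. 0) LZ" using Z by (auto simp: centered_rect_def)
  obtain LD where LD: "rect_cr l D (\<lambda>i. 0) LD" using D by (auto simp: centered_rect_def)
  interpret rough_shift l A Z D c L LZ LD eps M w
    by (rule rough_shift_of_roughly[OF rough \<open>eps < 1/2\<close> A LZ LD box w])
  show ?thesis unfolding roughly_def
  proof (intro conjI)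
    show "is_rect l (translate A (vneg w))" using rect_cr_shifted by (auto simp: is_rect_def)
    show "rscale l 2 (translate A (vneg w)) \<subseteq> D" by (rule shifted_subset_D) simp_all
    show "y \<in> XH G act X \<H>" "0 < 2 * eps" "2 * eps < 1" using y eps by simp_all
    have "2 * real (LZ i) \<le> 2 * eps * real (L i)" if "i < l" for i
      using Z_small[OF that] coordinate_bounds(1)[OF that] by simp
    then show "rsub l (rscale l 2 Z) (rscale l (2 * eps) (translate A (vneg w)))"
      using rsub_rscale_iff[OF Z rect_cr_shifted, of "2 * eps" 2] eps by simp
    show "act_img act phi (rscale l (1 - 2 * eps) (translate A (vneg w))) y \<subseteq> R"
    proof
      fix p assume "p \<in> act_img act phi (rscale l (1 - 2 * eps) (translate A (vneg w))) y"
      then obtain s where s: "s \<in> rscale l (1 - 2 * eps) (translate A (vneg w))" and p: "p = act (phi s) y"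
        by (auto simp: act_img_def)
      obtain z where "z \<in> Z" and "p = act (phi (vadd (vadd s w) z)) x"
        using inner[OF inner_shift(1,2)[OF s]] p by blast
      then have "p \<in> act_img act phi (rscale l (1 - eps) A) x"
        using inner_shift(3)[OF s] unfolding act_img_def by blast
      then show "p \<in> R" using rough by (auto simp: roughly_def)
    qed
    show "R \<subseteq> act_img act phi (rscale l (1 + 2 * eps) (translate A (vneg w))) y"
    proof
      fix p assume "p \<in> R"
      then obtain t where t: "t \<in> rscale l (1 + eps) A" and p: "p = act (phi t) x"
        using rough by (auto simp: roughly_def act_img_def)
      obtain z where "z \<in> Z" and "p = act (phi (vadd (vadd t (vneg w)) z)) y"
        using outer[OF outer_shift(1,2)[OF t]] p by blast
      then show "p \<in> act_img act phi (rscale l (1 + 2 * eps) (translate A (vneg w))) y"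
        using outer_shift(3)[OF t] unfolding act_img_def by blast
    qed
  qed
qed

lemma (in group_action) act_eq_if_lcoset_eq:
  assumes "x \<in> E" "g \<in> carrier G" "h \<in> carrier G"
    and "g <# stabilizer G \<phi> x = h <# stabilizer G \<phi> x"
  shows "\<phi> g x = \<phi> h x"
proof -
  interpret group G using group_hom group_hom.axioms(1) by auto
  have "g \<otimes> \<one> \<in> g <# stabilizer G \<phi> x"
    using stabilizer_one_closed[OF assms(1)] unfolding l_coset_def by blast
  then have "g \<in> h <# stabilizer G \<phi> x" using assms(2,4) by simp
  then obtain k where k: "k \<in> stabilizer G \<phi> x" "g = h \<otimes> k"
    unfolding l_coset_def by blast
  then have "k \<in> carrier G" "\<phi> k x = x" unfolding stabilizer_def by auto
  then show ?thesis using k composition_rule[OF assms(1,3)] by simp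
qed

lemma chart_mult_coset:
  assumes "chart G l phi D Z \<H>" "r \<in> D" "s \<in> D" "H \<in> \<H>" "translate Z (vadd r s) \<subseteq> D"
  shows "\<exists>z\<in>Z. (phi r \<otimes>\<^bsub>G\<^esub> phi s) <#\<^bsub>G\<^esub> H = phi (vadd (vadd r s) z) <#\<^bsub>G\<^esub> H"
  using assms unfolding chart_def by blast

lemma chart_div_coset:
  assumes "chart G l phi D Z \<H>" "r \<in> D" "s \<in> D" "H \<in> \<H>" "translate Z (vadd r (vneg s)) \<subseteq> D"
  shows "\<exists>z\<in>Z. (phi r \<otimes>\<^bsub>G\<^esub> inv\<^bsub>G\<^esub> phi s) <#\<^bsub>G\<^esub> H = phi (vadd (vadd r (vneg s)) z) <#\<^bsub>G\<^esub> H"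
  using assms unfolding chart_def by blast

lemma chart_act_mult:
  assumes "group_action G X act" "chart G l phi D Z \<H>" "x \<in> XH G act X \<H>"
    and "r \<in> D" "s \<in> D" "translate Z (vadd r s) \<subseteq> D"
  shows "\<exists>z\<in>Z. act (phi r) (act (phi s) x) = act (phi (vadd (vadd r s) z)) x"
proof -
  interpret group_action G X act by fact
  interpret group G using group_hom group_hom.axioms(1) by auto
  have x: "x \<in> X" "stabilizer G act x \<in> \<H>" using assms(3) by (auto simp: XH_def)
  have phi: "phi ` D \<subseteq> carrier G" using assms(2) by (simp add: chart_def)
  obtain z where z: "z \<in> Z"
    and coset: "(phi r \<otimes>\<^bsub>G\<^esub> phi s) <#\<^bsub>G\<^esub> stabilizer G act x
      = phi (vadd (vadd r s) z) <#\<^bsub>G\<^esub> stabilizer G act x"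
    using chart_mult_coset[OF assms(2,4,5) x(2) assms(6)] by blast
  have "vadd (vadd r s) z \<in> D" using assms(6) z vadd_commute unfolding translate_def by blast
  then have g: "phi r \<in> carrier G" "phi s \<in> carrier G" "phi (vadd (vadd r s) z) \<in> carrier G"
    using phi assms(4,5) by auto
  have "act (phi r) (act (phi s) x) = act (phi r \<otimes>\<^bsub>G\<^esub> phi s) x"
    using composition_rule[OF x(1) g(1,2)] by simp
  also have "\<dots> = act (phi (vadd (vadd r s) z)) x"
    by (rule act_eq_if_lcoset_eq[OF x(1) _ g(3) coset]) (use g in simp)
  finally show ?thesis using z by blast
qed

lemma chart_act_div:
  assumes "group_action G X act" "chart G l phi D Z \<H>" "x \<in> XH G act X \<H>"
    and "r \<in> D" "s \<in> D" "translate Z (vadd r (vneg s)) \<subseteq> D"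
  shows "\<exists>z\<in>Z. act (phi r) (act (inv\<^bsub>G\<^esub> phi s) x) = act (phi (vadd (vadd r (vneg s)) z)) x"
proof -
  interpret group_action G X act by fact
  interpret group G using group_hom group_hom.axioms(1) by auto
  have x: "x \<in> X" "stabilizer G act x \<in> \<H>" using assms(3) by (auto simp: XH_def)
  have phi: "phi ` D \<subseteq> carrier G" using assms(2) by (simp add: chart_def)
  obtain z where z: "z \<in> Z"
    and coset: "(phi r \<otimes>\<^bsub>G\<^esub> inv\<^bsub>G\<^esub> phi s) <#\<^bsub>G\<^esub> stabilizer G act x
      = phi (vadd (vadd r (vneg s)) z) <#\<^bsub>G\<^esub> stabilizer G act x"
    using chart_div_coset[OF assms(2,4,5) x(2) assms(6)] by blast
  have "vadd (vadd r (vneg s)) z \<in> D" using assms(6) z vadd_commute unfolding translate_def by blast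
  then have g: "phi r \<in> carrier G" "inv\<^bsub>G\<^esub> phi s \<in> carrier G" "phi (vadd (vadd r (vneg s)) z) \<in> carrier G"
    using phi assms(4,5) by auto
  have "act (phi r) (act (inv\<^bsub>G\<^esub> phi s) x) = act (phi r \<otimes>\<^bsub>G\<^esub> inv\<^bsub>G\<^esub> phi s) x"
    using composition_rule[OF x(1) g(1,2)] by simp
  also have "\<dots> = act (phi (vadd (vadd r (vneg s)) z)) x"
    by (rule act_eq_if_lcoset_eq[OF x(1) _ g(3) coset]) (use g in simp)
  finally show ?thesis using z by blast
qed

lemma roughly_at_image:
  assumes ga: "group_action G X act" and chart: "chart G l phi D Z \<H>" and "eps < 1/2"
    and rough: "roughly G act X l phi D Z \<H> eps A x R"
    and box: "msum (rscale l (real M + 2) A) (rscale l 4 Z) \<subseteq> D"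
    and y: "y \<in> XH G act X \<H>" and u: "u \<in> rscale l (real M) A" and yu: "y = act (phi u) x"
  shows "roughly G act X l phi D Z \<H> (2 * eps) (translate A (vneg u)) y R"
proof -
  have x: "x \<in> XH G act X \<H>" and A: "is_rect l A" using rough by (simp_all add: roughly_def)
  have Z: "centered_rect l Z" and D: "centered_rect l D" and phi: "phi ` D \<subseteq> carrier G"
    using chart by (auto simp: chart_def centered_rect_def)
  have uD: "u \<in> D" using rscale_subset_of_box[OF Z A box] u by blast
  have xy: "x = act (inv\<^bsub>G\<^esub> phi u) y"
    using group_action.orbit_sym_aux[OF ga] phi uD x yu by (auto simp: XH_def)
  show ?thesis
  proof (rule roughly_transfer[OF rough \<open>eps < 1/2\<close> Z D box u y])
    fix s assume "s \<in> D" "translate Z (vadd s u) \<subseteq> D"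
    then show "\<exists>z\<in>Z. act (phi s) y = act (phi (vadd (vadd s u) z)) x"
      using chart_act_mult[OF ga chart x _ uD] yu by simp
  next
    fix t assume "t \<in> D" "translate Z (vadd t (vneg u)) \<subseteq> D"
    then show "\<exists>z\<in>Z. act (phi t) x = act (phi (vadd (vadd t (vneg u)) z)) y"
      using chart_act_div[OF ga chart y _ uD] xy by simp
  qed
qed

lemma roughly_at_preimage:
  assumes ga: "group_action G X act" and chart: "chart G l phi D Z \<H>" and "eps < 1/2"
    and rough: "roughly G act X l phi D Z \<H> eps A x R"
    and box: "msum (rscale l (real M + 2) A) (rscale l 4 Z) \<subseteq> D"
    and y: "y \<in> XH G act X \<H>" and v: "vneg v \<in> rscale l (real M) A" and xv: "x = act (phi v) y"
  shows "roughly G act X l phi D Z \<H> (2 * eps) (translate A v) y R"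
proof -
  have x: "x \<in> XH G act X \<H>" and A: "is_rect l A" using rough by (simp_all add: roughly_def)
  have Z: "centered_rect l Z" and D: "centered_rect l D" and phi: "phi ` D \<subseteq> carrier G"
    using chart by (auto simp: chart_def centered_rect_def)
  have "vneg v \<in> D" using rscale_subset_of_box[OF Z A box] v by blast
  then have vD: "v \<in> D" using vneg_mem_centered_rect[OF D] by fastforce
  have yx: "y = act (inv\<^bsub>G\<^esub> phi v) x"
    using group_action.orbit_sym_aux[OF ga] phi vD y xv by (auto simp: XH_def)
  have "roughly G act X l phi D Z \<H> (2 * eps) (translate A (vneg (vneg v))) y R"
  proof (rule roughly_transfer[OF rough \<open>eps < 1/2\<close> Z D box v y])
    fix s assume "s \<in> D" "translate Z (vadd s (vneg v)) \<subseteq> D"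
    then show "\<exists>z\<in>Z. act (phi s) y = act (phi (vadd (vadd s (vneg v)) z)) x"
      using chart_act_div[OF ga chart x _ vD] yx by simp
  next
    fix t assume "t \<in> D" "translate Z (vadd t (vneg (vneg v))) \<subseteq> D"
    then show "\<exists>z\<in>Z. act (phi t) x = act (phi (vadd (vadd t (vneg (vneg v))) z)) y"
      using chart_act_mult[OF ga chart y _ vD] xv by simp
  qed
  then show ?thesis by simp
qed

theorem lemma5p2:
  fixes G :: "('g, 'm) monoid_scheme" and act :: "'g \<Rightarrow> 'x \<Rightarrow> 'x" and X :: "'x set"
    and l :: nat and phi :: "('c::{finite,ab_group_add}) zvec \<Rightarrow> 'g"
    and D Z A :: "'c zvec set" and \<H> :: "'g set set"
    and eps :: real and x y :: 'x and R :: "'x set" and M :: nat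
  assumes "group G" and "countable (carrier G)" and "group_action G X act"
    and "chart G l phi D Z \<H>"
    and "0 < eps" and "eps < 1/2"
    and "is_rect l A"
    and "R \<subseteq> X"
    and "x \<in> XH G act X \<H>"
    and "roughly G act X l phi D Z \<H> eps A x R"
    and "0 < M"
    and "msum (rscale l (real M + 2) A) (rscale l 4 Z) \<subseteq> D"
    and "y \<in> XH G act X \<H>"
  shows "(\<forall>u. u \<in> rscale l (real M) A \<and> y = act (phi u) x
            \<longrightarrow> roughly G act X l phi D Z \<H> (2 * eps) (translate A (vneg u)) y R)
       \<and> (\<forall>v. vneg v \<in> rscale l (real M) A \<and> x = act (phi v) y
            \<longrightarrow> roughly G act X l phi D Z \<H> (2 * eps) (translate A v) y R)"
  using roughly_at_image[OF assms(3,4,6,10,12,13)] roughly_at_preimage[OF assms(3,4,6,10,12,13)]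
  by blast

end
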